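(* Let $n,m,r\in\mathbb{N}$, $\overline{f}\in C[0,1]$, let $\overline{B}_{n,m}$ be the composite Bernstein operator and $(\overline{B}_{n,m})^r$ its $r$-th iterate, and let $S_{\Delta_m}\overline{f}$ be the piecewise linear interpolant of $\overline{f}$ at the nodes $0,\frac1m,\dots,\frac{m-1}{m},1$. Then for every $k\in\{1,\dots,m\}$ and $x\in\left[\frac{k-1}{m},\frac{k}{m}\right]$, $$ \left|(\overline{B}_{n,m})^r(\overline{f};x)-S_{\Delta_m}(\overline{f};x)\right|\le\frac94\,\omega_2\left(\overline{f};\sqrt{\left(x-\frac{k-1}{m}\right)\left(\frac{k}{m}-x\right)\left(1-\frac1n\right)^r}\right), $$ and consequently $$ \left\|(\overline{B}_{n,m})^r(\overline{f})-S_{\Delta_m}(\overline{f})\right\|_\infty\le\frac94\,\omega_2\left(\overline{f};\frac{1}{2m}\sqrt{\left(1-\frac1n\right)^r}\right); $$ in particular $(\overline{B}_{n,m})^r(\overline{f})\to S_{\Delta_m}(\overline{f})$ uniformly on $[0,1]$ as $r\to\infty$ for fixed $n,m$.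
   Context: For $a<b$, $f:[a,b]\to\mathbb{R}$ and $n\in\mathbb{N}$, $B_n^{[a,b]}(f;x)=\frac{1}{(b-a)^n}\sum_{i=0}^n\binom{n}{i}(x-a)^i(b-x)^{n-i}f\left(a+i\frac{b-a}{n}\right)$. For $1\le k\le m$ put $B_{n,k}(f;x):=B_n^{[\frac{k-1}{m},\frac{k}{m}]}(f;x)$ and $\overline{B}_{n,m}(f;x):=B_{n,k}(f;x)$ for $x\in\left[\frac{k-1}{m},\frac{k}{m}\right]$; this maps $C[0,1]$ into $C[0,1]$. $\omega_2(f,\delta)=\sup\{|f(x-h)-2f(x)+f(x+h)|: x\pm h\in[0,1],\ |h|\le\delta\}$. $\|\cdot\|_\infty$ is the sup norm on $[0,1]$. *)

theory Defs
  imports "HOL-Analysis.Analysis"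
begin

definition bern_ab :: "real \<Rightarrow> real \<Rightarrow> nat \<Rightarrow> (real \<Rightarrow> real) \<Rightarrow> real \<Rightarrow> real" where
  "bern_ab a b n f x =
     (1 / (b - a) ^ n) * (\<Sum>i = 0..n. real (n choose i) * (x - a) ^ i * (b - x) ^ (n - i)
                                       * f (a + real i * (b - a) / real n))"

text \<open>At interior nodes the two adjacent choices agree, since Bernstein polynomials
  and linear interpolants interpolate at the endpoints.\<close>
definition sub_idx :: "nat \<Rightarrow> real \<Rightarrow> nat" where
  "sub_idx m x = max 1 (nat \<lceil>real m * x\<rceil>)"

definition comp_bern :: "nat \<Rightarrow> nat \<Rightarrow> (real \<Rightarrow> real) \<Rightarrow> real \<Rightarrow> real" where
  "comp_bern n m f x =
     (let k = sub_idx m x in bern_ab ((real k - 1) / real m) (real k / real m) n f x)"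

definition pw_lin :: "nat \<Rightarrow> (real \<Rightarrow> real) \<Rightarrow> real \<Rightarrow> real" where
  "pw_lin m f x =
     (let k = sub_idx m x; a = (real k - 1) / real m; b = real k / real m
      in ((b - x) * f a + (x - a) * f b) / (b - a))"

definition omega2 :: "(real \<Rightarrow> real) \<Rightarrow> real \<Rightarrow> real" where
  "omega2 f \<delta> = Sup {\<bar>f (x - h) - 2 * f x + f (x + h)\<bar> | x h.
                        x - h \<in> {0..1} \<and> x + h \<in> {0..1} \<and> \<bar>h\<bar> \<le> \<delta>}"

definition sup_norm01 :: "(real \<Rightarrow> real) \<Rightarrow> real" where
  "sup_norm01 g = Sup ((\<lambda>x. \<bar>g x\<bar>) ` {0..1})"

end

theory Submission
  imports Defs
begin

text \<open>On the piece \<open>[a, b] \<ni> x\<close>, the functional \<open>L g = (B^r g)(x)\<close> is positive, linear, reproduces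
  affine functions and maps the weight \<open>(t - a)(b - t)\<close> to \<open>\<delta>\<^sup>2 = (x - a)(b - x)(1 - 1/n)^r\<close>.
  Compare \<open>f\<close> with its broken-line interpolant \<open>s\<close> on a uniform grid of step \<open>h \<in> [2\<delta>/3, \<delta>]\<close>:
  \<open>|f - s| \<le> \<omega>\<^sub>2(f, \<delta>)\<close>, and by a discrete maximum principle \<open>s\<close> deviates from the chord
  of \<open>f\<close> over \<open>[a, b]\<close> by at most \<open>\<omega>\<^sub>2(f, \<delta>) (t - a)(b - t) / (2 h\<^sup>2)\<close>. Applying \<open>L\<close>, which
  fixes the chord, bounds the error by \<open>\<omega>\<^sub>2 + \<omega>\<^sub>2 \<delta>\<^sup>2 / (2 h\<^sup>2) \<le> 17/8 \<omega>\<^sub>2(f, \<delta>)\<close>.\<close>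

section \<open>Bernstein operators on an interval\<close>

lemma bern_ab_eq_Bernstein:
  assumes "a < b"
  shows "bern_ab a b n g x = (\<Sum>i\<le>n. Bernstein n i ((x - a) / (b - a)) * g (a + real i * (b - a) / real n))"
  unfolding bern_ab_def atMost_atLeast0[symmetric] sum_distrib_left
proof (rule sum.cong[OF refl])
  fix i assume "i \<in> {..n}"
  then have "(b - a) ^ n = (b - a) ^ i * (b - a) ^ (n - i)"
    by (simp add: power_add[symmetric])
  moreover have "1 - (x - a) / (b - a) = (b - x) / (b - a)"
    using assms by (simp add: field_simps)
  ultimately show "1 / (b - a) ^ n * (real (n choose i) * (x - a) ^ i * (b - x) ^ (n - i)
                     * g (a + real i * (b - a) / real n))
      = Bernstein n i ((x - a) / (b - a)) * g (a + real i * (b - a) / real n)"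
    unfolding Bernstein_def using assms by (simp add: power_divide field_simps)
qed

lemma bern_ab_node_in:
  assumes "a \<le> b" "i \<le> n"
  shows "a + real i * (b - a) / real n \<in> {a..b}"
proof (cases "n = 0")
  case False
  then have "real i * (b - a) / real n \<le> b - a"
    using assms by (simp add: divide_le_eq mult_right_mono mult.commute)
  then show ?thesis using assms by auto
qed (use assms in auto)

lemma bern_ab_cong:
  assumes "a < b" "\<forall>t\<in>{a..b}. g t = h t"
  shows "bern_ab a b n g x = bern_ab a b n h x"
  unfolding bern_ab_def using assms bern_ab_node_in[of a b]
  by (intro arg_cong[where f = "\<lambda>s. _ * s"] sum.cong) auto

lemma bern_ab_mono:
  assumes "a < b" "x \<in> {a..b}" "\<forall>t\<in>{a..b}. g t \<le> h t"
  shows "bern_ab a b n g x \<le> bern_ab a b n h x"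
proof -
  have "0 \<le> (x - a) / (b - a)" "(x - a) / (b - a) \<le> 1" using assms by auto
  then show ?thesis unfolding bern_ab_eq_Bernstein[OF assms(1)]
    using assms bern_ab_node_in[of a b] Bernstein_nonneg
    by (intro sum_mono mult_left_mono) auto
qed

lemma bern_ab_diff: "bern_ab a b n (\<lambda>t. g t - h t) x = bern_ab a b n g x - bern_ab a b n h x"
  unfolding bern_ab_def by (simp add: sum_subtractf algebra_simps)

lemma bern_ab_cmult: "bern_ab a b n (\<lambda>t. c * g t) x = c * bern_ab a b n g x"
  unfolding bern_ab_def by (simp add: sum_distrib_left algebra_simps)

lemma bern_ab_affine:
  assumes "a < b" "n \<ge> 1"
  shows "bern_ab a b n (\<lambda>t. c0 + c1 * t) x = c0 + c1 * x"
proof -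
  let ?y = "(x - a) / (b - a)"
  have "bern_ab a b n (\<lambda>t. c0 + c1 * t) x =
     (\<Sum>i\<le>n. (c0 + c1 * a) * Bernstein n i ?y + (c1 * (b - a) / real n) * (real i * Bernstein n i ?y))"
    unfolding bern_ab_eq_Bernstein[OF assms(1)] by (intro sum.cong) (auto simp: algebra_simps)
  also have "\<dots> = (c0 + c1 * a) + (c1 * (b - a) / real n) * (real n * ?y)"
    by (simp only: sum.distrib sum_distrib_left[symmetric] sum_Bernstein sum_k_Bernstein) simp
  also have "\<dots> = c0 + c1 * x" using assms by (simp add: field_simps)
  finally show ?thesis .
qed

lemma bern_ab_quadratic_weight:
  assumes "a < b" "n \<ge> 1"
  shows "bern_ab a b n (\<lambda>t. (t - a) * (b - t)) x = (1 - 1 / real n) * ((x - a) * (b - x))"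
proof -
  let ?y = "(x - a) / (b - a)" and ?s = "(b - a)^2"
  have "bern_ab a b n (\<lambda>t. (t - a) * (b - t)) x =
     (\<Sum>i\<le>n. (?s / real n) * (real i * Bernstein n i ?y)
        - (?s / (real n)^2) * (real i * (real i - 1) * Bernstein n i ?y)
        - (?s / (real n)^2) * (real i * Bernstein n i ?y))"
    unfolding bern_ab_eq_Bernstein[OF assms(1)] using assms
    by (intro sum.cong) (auto simp: field_simps power2_eq_square)
  also have "\<dots> = (?s / real n) * (real n * ?y) - (?s / (real n)^2) * (real n * (real n - 1) * ?y^2)
       - (?s / (real n)^2) * (real n * ?y)"
    by (simp only: sum_subtractf sum_distrib_left[symmetric] sum_kk_Bernstein sum_k_Bernstein)
  also have "\<dots> = (1 - 1 / real n) * (((b - a) * ?y) * ((b - a) * (1 - ?y)))"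
  proof -
    have "\<And>y s :: real. (s^2 / real n) * (real n * y) - (s^2 / (real n)^2) * (real n * (real n - 1) * y^2)
       - (s^2 / (real n)^2) * (real n * y) = (1 - 1 / real n) * ((s * y) * (s * (1 - y)))"
      using assms by (simp add: field_simps power2_eq_square)
    then show ?thesis .
  qed
  also have "(b - a) * ?y = x - a" using assms by simp
  also have "(b - a) * (1 - ?y) = b - x" using assms by (simp add: field_simps)
  finally show ?thesis .
qed

lemma bern_ab_left:
  assumes "a < b"
  shows "bern_ab a b n g a = g a"
proof -
  have "(\<Sum>i\<le>n. Bernstein n i ((a - a) / (b - a)) * g (a + real i * (b - a) / real n))
      = (\<Sum>i\<le>n. if i = 0 then g a else 0)"
    by (intro sum.cong) (auto simp: Bernstein_def)
  then show ?thesis unfolding bern_ab_eq_Bernstein[OF assms] by simp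
qed

lemma bern_ab_right:
  assumes "a < b" "n \<ge> 1"
  shows "bern_ab a b n g b = g b"
proof -
  have "(\<Sum>i\<le>n. Bernstein n i ((b - a) / (b - a)) * g (a + real i * (b - a) / real n))
      = (\<Sum>i\<le>n. if i = n then g b else 0)"
    using assms by (intro sum.cong) (auto simp: Bernstein_def)
  then show ?thesis unfolding bern_ab_eq_Bernstein[OF assms(1)] by simp
qed

lemma bern_ab_iter_diff:
  "(bern_ab a b n ^^ r) (\<lambda>t. g t - h t) = (\<lambda>x. (bern_ab a b n ^^ r) g x - (bern_ab a b n ^^ r) h x)"
  by (induction r) (simp_all add: bern_ab_diff)

lemma bern_ab_iter_cmult:
  "(bern_ab a b n ^^ r) (\<lambda>t. c * g t) = (\<lambda>x. c * (bern_ab a b n ^^ r) g x)"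
  by (induction r) (simp_all add: bern_ab_cmult)

lemma bern_ab_iter_mono:
  assumes "a < b" "\<forall>t\<in>{a..b}. g t \<le> h t"
  shows "\<forall>x\<in>{a..b}. (bern_ab a b n ^^ r) g x \<le> (bern_ab a b n ^^ r) h x"
  by (induction r) (use assms bern_ab_mono[OF assms(1)] in simp_all)

lemma bern_ab_iter_eigenfunction:
  assumes "a < b" "\<forall>x\<in>{a..b}. bern_ab a b n g x = c * g x"
  shows "\<forall>x\<in>{a..b}. (bern_ab a b n ^^ r) g x = c ^ r * g x"
proof (induction r)
  case (Suc r)
  have "(bern_ab a b n ^^ Suc r) g x = c ^ Suc r * g x" if x: "x \<in> {a..b}" for x
  proof -
    have "(bern_ab a b n ^^ Suc r) g x = bern_ab a b n (\<lambda>t. c ^ r * g t) x"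
      using bern_ab_cong[OF assms(1)] Suc by simp
    also have "\<dots> = c ^ Suc r * g x" using assms(2) x by (simp add: bern_ab_cmult)
    finally show ?thesis .
  qed
  then show ?case by blast
qed simp

lemma bern_ab_iter_affine:
  assumes "a < b" "n \<ge> 1" "x \<in> {a..b}"
  shows "(bern_ab a b n ^^ r) (\<lambda>t. c0 + c1 * t) x = c0 + c1 * x"
  using bern_ab_iter_eigenfunction[of a b n "\<lambda>t. c0 + c1 * t" 1 r] bern_ab_affine[OF assms(1,2)] assms
  by simp

lemma bern_ab_iter_quadratic_weight:
  assumes "a < b" "n \<ge> 1" "x \<in> {a..b}"
  shows "(bern_ab a b n ^^ r) (\<lambda>t. (t - a) * (b - t)) x = (1 - 1 / real n) ^ r * ((x - a) * (b - x))"
  using bern_ab_iter_eigenfunction[of a b n _ "1 - 1 / real n" r] bern_ab_quadratic_weight[OF assms(1,2)] assms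
  by simp

definition chord :: "real \<Rightarrow> real \<Rightarrow> (real \<Rightarrow> real) \<Rightarrow> real \<Rightarrow> real" where
  "chord a b f t = ((b - t) * f a + (t - a) * f b) / (b - a)"

lemma chord_eq_affine:
  "chord a b f t = (b * f a - a * f b) / (b - a) + (f b - f a) / (b - a) * t"
proof -
  have "(b - t) * f a + (t - a) * f b = (b * f a - a * f b) + (f b - f a) * t" by (simp add: algebra_simps)
  then show ?thesis unfolding chord_def by (simp add: add_divide_distrib)
qed

lemma chord_affine_comb:
  "chord a b f ((1 - l) * p + l * q) = (1 - l) * chord a b f p + l * chord a b f q"
proof -
  obtain \<alpha> \<beta> where "\<And>t. chord a b f t = \<alpha> + \<beta> * t" using chord_eq_affine by blast
  then show ?thesis by (simp add: algebra_simps)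
qed

lemma chord_second_diff: "chord a b f (y - k) - 2 * chord a b f y + chord a b f (y + k) = 0"
proof -
  obtain \<alpha> \<beta> where "\<And>t. chord a b f t = \<alpha> + \<beta> * t" using chord_eq_affine by blast
  then show ?thesis by (simp add: algebra_simps)
qed

lemma chord_left: "a \<noteq> b \<Longrightarrow> chord a b f a = f a"
  and chord_right: "a \<noteq> b \<Longrightarrow> chord a b f b = f b"
  unfolding chord_def by simp_all

lemma sub_idx_cases:
  assumes "m \<ge> 1" "1 \<le> k" "x \<in> {(real k - 1) / real m .. real k / real m}"
  obtains "sub_idx m x = k"
    | "x = (real k - 1) / real m" "k \<ge> 2" "sub_idx m x = k - 1"
proof -
  have mpos: "real m > 0" using assms by simp
  have lo: "real k - 1 \<le> real m * x" and hi: "real m * x \<le> real k"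
    using assms mpos by (auto simp: field_simps)
  show ?thesis
  proof (cases "real m * x = real k - 1")
    case True
    then have x: "x = (real k - 1) / real m" using mpos by (simp add: field_simps)
    have c: "\<lceil>real m * x\<rceil> = int k - 1" using True by simp
    show ?thesis
    proof (cases "k \<ge> 2")
      case True then show ?thesis using c x that unfolding sub_idx_def by (simp add: nat_diff_distrib)
    next
      case False then have "k = 1" using assms by simp
      then show ?thesis using c that unfolding sub_idx_def by simp
    qed
  next
    case False
    then have "\<lceil>real m * x\<rceil> = int k" using lo hi by (simp add: ceiling_eq_iff)
    then show ?thesis using that unfolding sub_idx_def using assms by simp
  qed
qed

lemma sub_idx_mem:
  assumes "m \<ge> 1" "x \<in> {0..1}"
  shows "sub_idx m x \<in> {1..m}"
    and "x \<in> {(real (sub_idx m x) - 1) / real m .. real (sub_idx m x) / real m}"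
proof -
  have mpos: "real m > 0" using assms by simp
  have mx: "0 \<le> real m * x" "real m * x \<le> real m" using assms mpos by auto
  have "sub_idx m x \<in> {1..m} \<and> x \<in> {(real (sub_idx m x) - 1) / real m .. real (sub_idx m x) / real m}"
  proof (cases "\<lceil>real m * x\<rceil> \<le> 0")
    case True
    then have "x = 0" using assms(2) mx mpos by (simp add: mult_le_0_iff ceiling_le_zero)
    moreover have "sub_idx m x = 1" unfolding sub_idx_def using True by simp
    ultimately show ?thesis using assms mpos by auto
  next
    case False
    define c where "c = \<lceil>real m * x\<rceil>"
    have c1: "c \<ge> 1" using False unfolding c_def by simp
    have si: "sub_idx m x = nat c" unfolding sub_idx_def c_def[symmetric] using c1 by (simp add: max_def)
    have "real_of_int c - 1 < real m * x" "real m * x \<le> real_of_int c" "c \<le> int m"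
      using mx(2) unfolding c_def by (simp_all add: ceiling_correct ceiling_less_iff ceiling_le_iff)
    then show ?thesis unfolding si using c1 mpos by (auto simp: field_simps)
  qed
  then show "sub_idx m x \<in> {1..m}"
    and "x \<in> {(real (sub_idx m x) - 1) / real m .. real (sub_idx m x) / real m}" by auto
qed

lemma comp_bern_iter_eq_bern_ab_iter:
  assumes "n \<ge> 1" "m \<ge> 1" "k \<in> {1..m}"
  shows "\<forall>x\<in>{(real k - 1) / real m .. real k / real m}.
     (comp_bern n m ^^ r) f x = (bern_ab ((real k - 1) / real m) (real k / real m) n ^^ r) f x"
proof (induction r)
  case (Suc r)
  define a where "a = (real k - 1) / real m"
  define b where "b = real k / real m"
  have mpos: "real m > 0" using assms by simp
  have ab: "a < b" unfolding a_def b_def using mpos by (simp add: divide_strict_right_mono)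
  have k1: "1 \<le> k" using assms(3) by simp
  note IH = Suc[folded a_def b_def]
  have "(comp_bern n m ^^ Suc r) f x = (bern_ab a b n ^^ Suc r) f x" if x: "x \<in> {a..b}" for x
    using assms(2) k1 x[unfolded a_def b_def]
  proof (cases rule: sub_idx_cases)
    case 1
    have "(comp_bern n m ^^ Suc r) f x = bern_ab a b n ((comp_bern n m ^^ r) f) x"
      using 1 by (simp add: comp_bern_def Let_def a_def b_def)
    also have "\<dots> = bern_ab a b n ((bern_ab a b n ^^ r) f) x"
      by (rule bern_ab_cong[OF ab]) (use IH in blast)
    finally show ?thesis by simp
  next
    case 2
    \<comment> \<open>At the left node the operator uses the previous piece, where the Bernstein
      polynomial interpolates at its right endpoint.\<close>
    define a' where "a' = (real (k - 1) - 1) / real m"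
    have rk: "real (k - 1) = real k - 1" using 2 by (simp add: of_nat_diff)
    have a'a: "a' < a" unfolding a'_def a_def rk using mpos by (simp add: divide_strict_right_mono)
    have "(comp_bern n m ^^ Suc r) f x = bern_ab a' a n ((comp_bern n m ^^ r) f) a"
      unfolding a'_def a_def using 2 by (simp add: comp_bern_def Let_def rk)
    also have "\<dots> = (comp_bern n m ^^ r) f a" by (rule bern_ab_right[OF a'a assms(1)])
    also have "\<dots> = (bern_ab a b n ^^ r) f a" using IH ab by auto
    also have "\<dots> = (bern_ab a b n ^^ Suc r) f a" using bern_ab_left[OF ab] by simp
    finally show ?thesis using 2 by (simp add: a_def)
  qed
  then show ?case unfolding a_def b_def by blast
qed simp

lemma pw_lin_on_piece:
  assumes "m \<ge> 1" "1 \<le> k" "x \<in> {(real k - 1) / real m .. real k / real m}"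
  shows "pw_lin m f x = chord ((real k - 1) / real m) (real k / real m) f x"
  using assms
proof (cases rule: sub_idx_cases)
  case 1
  then show ?thesis by (simp add: pw_lin_def chord_def Let_def)
next
  case 2
  \<comment> \<open>At the left node the previous piece is used; both interpolants equal \<open>f x\<close> there.\<close>
  have rk: "real (k - 1) = real k - 1" using 2 by (simp add: of_nat_diff)
  have "real m > 0" using assms by simp
  then have "pw_lin m f x = chord ((real k - 1 - 1) / real m) ((real k - 1) / real m) f x"
    unfolding pw_lin_def chord_def Let_def 2(3) rk by simp
  also have "\<dots> = f x" using \<open>real m > 0\<close> unfolding 2(1) by (intro chord_right) simp
  also have "\<dots> = chord ((real k - 1) / real m) (real k / real m) f x"
    using \<open>real m > 0\<close> unfolding 2(1) by (intro chord_left[symmetric]) simp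
  finally show ?thesis .
qed

section \<open>The second-order modulus of smoothness\<close>

lemma second_diff_le_omega2:
  assumes "continuous_on {0..1} f" "y - k \<in> {0..1}" "y + k \<in> {0..1}" "\<bar>k\<bar> \<le> d"
  shows "\<bar>f (y - k) - 2 * f y + f (y + k)\<bar> \<le> omega2 f d"
proof -
  obtain B where B: "\<And>t. t \<in> {0..1} \<Longrightarrow> \<bar>f t\<bar> \<le> B"
    using compact_imp_bounded[OF compact_continuous_image[OF assms(1) compact_Icc]]
    unfolding bounded_iff by (metis image_eqI real_norm_def)
  have "bdd_above {\<bar>f (x - h) - 2 * f x + f (x + h)\<bar> | x h.
                     x - h \<in> {0..1} \<and> x + h \<in> {0..1} \<and> \<bar>h\<bar> \<le> d}"
  proof (rule bdd_aboveI, clarify)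
    fix x h :: real assume "x - h \<in> {0..1}" "x + h \<in> {0..1}"
    moreover from this have "x \<in> {0..1}" by auto
    ultimately show "\<bar>f (x - h) - 2 * f x + f (x + h)\<bar> \<le> 4 * B"
      using B[of "x - h"] B[of "x + h"] B[of x] by (simp add: abs_le_iff)
  qed
  then show ?thesis unfolding omega2_def by (rule cSup_upper[rotated]) (use assms in blast)
qed

lemma omega2_le:
  assumes "0 \<le> d" "\<And>y k. y - k \<in> {0..1} \<Longrightarrow> y + k \<in> {0..1} \<Longrightarrow> \<bar>k\<bar> \<le> d \<Longrightarrow>
       \<bar>f (y - k) - 2 * f y + f (y + k)\<bar> \<le> M"
  shows "omega2 f d \<le> M"
  unfolding omega2_def
proof (rule cSup_least)
  show "{\<bar>f (x - h) - 2 * f x + f (x + h)\<bar> | x h. x - h \<in> {0..1} \<and> x + h \<in> {0..1} \<and> \<bar>h\<bar> \<le> d} \<noteq> {}"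
    using assms(1) by (auto intro!: exI[of _ 0])
qed (use assms in auto)

lemma omega2_nonneg:
  assumes "continuous_on {0..1} f" "0 \<le> d"
  shows "0 \<le> omega2 f d"
  using second_diff_le_omega2[OF assms(1), of 0 0 d] assms by simp

lemma omega2_mono:
  assumes "continuous_on {0..1} f" "0 \<le> d1" "d1 \<le> d2"
  shows "omega2 f d1 \<le> omega2 f d2"
  using assms by (intro omega2_le second_diff_le_omega2) auto

lemma omega2_small:
  assumes "continuous_on {0..1} f" "e > 0"
  obtains d where "d > 0" "\<And>\<eta>. 0 \<le> \<eta> \<Longrightarrow> \<eta> \<le> d \<Longrightarrow> omega2 f \<eta> \<le> e"
proof -
  obtain d where d: "d > 0" and hd: "\<And>x x'. x \<in> {0..1} \<Longrightarrow> x' \<in> {0..1} \<Longrightarrow> dist x' x < d \<Longrightarrow>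
      dist (f x') (f x) < e / 2"
    using compact_uniformly_continuous[OF assms(1) compact_Icc] assms(2)
    unfolding uniformly_continuous_on_def by (metis half_gt_zero)
  have "omega2 f \<eta> \<le> e" if "0 \<le> \<eta>" "\<eta> \<le> d / 2" for \<eta>
  proof (rule omega2_le[OF that(1)])
    fix y k assume yk: "y - k \<in> {0..1}" "y + k \<in> {0..1}" "\<bar>k\<bar> \<le> \<eta>"
    then have "y \<in> {0..1}" "\<bar>k\<bar> < d" using that d by auto
    then have "\<bar>f (y - k) - f y\<bar> < e / 2" "\<bar>f (y + k) - f y\<bar> < e / 2"
      using hd yk by (auto simp: dist_real_def)
    then show "\<bar>f (y - k) - 2 * f y + f (y + k)\<bar> \<le> e" by linarith
  qed
  then show ?thesis using that[of "d / 2"] d by simp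
qed

section \<open>Broken-line interpolation on a uniform grid\<close>

lemma discrete_concave_nonneg:
  fixes u :: "nat \<Rightarrow> real"
  assumes "u 0 = 0" "u N = 0"
    and concave: "\<And>j. 0 < j \<Longrightarrow> j < N \<Longrightarrow> u (j - 1) + u (j + 1) \<le> 2 * u j"
    and "j \<le> N"
  shows "0 \<le> u j"
proof (rule ccontr)
  assume neg: "\<not> 0 \<le> u j"
  define mv where "mv = Min (u ` {..N})"
  have mv_le: "i \<le> N \<Longrightarrow> mv \<le> u i" for i unfolding mv_def by auto
  have "mv \<in> u ` {..N}" unfolding mv_def by (intro Min_in) auto
  then have ex: "\<exists>i. i \<le> N \<and> u i = mv" by auto
  \<comment> \<open>The leftmost minimiser is an interior point strictly below its left neighbour.\<close>
  define i where "i = (LEAST i. i \<le> N \<and> u i = mv)"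
  have i: "i \<le> N" "u i = mv" using LeastI_ex[OF ex] unfolding i_def by auto
  have mv_neg: "mv < 0" using mv_le[OF \<open>j \<le> N\<close>] neg by simp
  have "i \<noteq> 0" "i \<noteq> N" using i(2) mv_neg assms(1,2) by (metis less_irrefl)+
  then have "0 < i" "i < N" using i(1) by auto
  moreover have "u (i - 1) \<noteq> mv"
    using not_less_Least[of "i - 1" "\<lambda>i. i \<le> N \<and> u i = mv"] \<open>0 < i\<close> i unfolding i_def by auto
  ultimately have "mv < u (i - 1)" "mv \<le> u (i + 1)" using mv_le[of "i - 1"] mv_le[of "i + 1"] by force+
  then show False using concave[OF \<open>0 < i\<close> \<open>i < N\<close>] i by linarith
qed

lemma abs_le_of_second_diff_le:
  fixes u :: "nat \<Rightarrow> real"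
  assumes "u 0 = 0" "u N = 0"
    and second_diff: "\<And>j. 0 < j \<Longrightarrow> j < N \<Longrightarrow> \<bar>u (j - 1) - 2 * u j + u (j + 1)\<bar> \<le> W"
    and "j \<le> N"
  shows "\<bar>u j\<bar> \<le> W / 2 * (real j * (real N - real j))"
proof -
  define p where "p j = W / 2 * (real j * (real N - real j))" for j
  have p_second_diff: "p (j - 1) + p (j + 1) - 2 * p j = - W" if "0 < j" for j
    using that unfolding p_def by (simp add: of_nat_diff algebra_simps)
  have "0 \<le> p j + s * u j" if s: "s = 1 \<or> s = -1" for s
  proof (rule discrete_concave_nonneg[where u = "\<lambda>j. p j + s * u j", OF _ _ _ \<open>j \<le> N\<close>])
    fix i assume "0 < i" "i < N"
    then show "p (i - 1) + s * u (i - 1) + (p (i + 1) + s * u (i + 1)) \<le> 2 * (p i + s * u i)"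
      using p_second_diff[of i] second_diff[of i] s by (auto simp: abs_le_iff algebra_simps)
  qed (simp_all add: p_def assms)
  from this[of 1] this[of "-1"] show ?thesis unfolding p_def by linarith
qed

lemma chord_error_le_second_diff:
  fixes f :: "real \<Rightarrow> real"
  assumes "p < q" and cont: "continuous_on {p..q} f"
    and second_diff: "\<And>y k. y - k \<in> {p..q} \<Longrightarrow> y + k \<in> {p..q} \<Longrightarrow> \<bar>k\<bar> \<le> (q - p) / 2 \<Longrightarrow>
               \<bar>f (y - k) - 2 * f y + f (y + k)\<bar> \<le> W"
    and "t \<in> {p..q}"
  shows "\<bar>f t - chord p q f t\<bar> \<le> W"
proof -
  define E where "E t = f t - chord p q f t" for t
  have "continuous_on {p..q} (\<lambda>t. \<bar>E t\<bar>)" unfolding E_def chord_eq_affine by (intro continuous_intros cont)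
  then obtain s where s: "s \<in> {p..q}" and s_max: "\<And>t. t \<in> {p..q} \<Longrightarrow> \<bar>E t\<bar> \<le> \<bar>E s\<bar>"
    using continuous_attains_sup[OF compact_Icc] \<open>p < q\<close> by (metis atLeastAtMost_iff empty_iff less_eq_real_def)
  \<comment> \<open>Reflecting the maximiser about the nearer endpoint, where the error vanishes, bounds it
    by a second difference.\<close>
  define k where "k = min (s - p) (q - s)"
  have in_pq: "s - k \<in> {p..q}" "s + k \<in> {p..q}" "\<bar>k\<bar> \<le> (q - p) / 2"
    using s unfolding k_def by (auto simp: min_def)
  have "E (s - k) = 0 \<or> E (s + k) = 0"
    using \<open>p < q\<close> unfolding k_def E_def by (auto simp: min_def chord_left chord_right)
  moreover have "\<bar>E (s - k)\<bar> \<le> \<bar>E s\<bar>" "\<bar>E (s + k)\<bar> \<le> \<bar>E s\<bar>" using s_max in_pq by auto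
  ultimately have "\<bar>E s\<bar> \<le> \<bar>E (s - k) - 2 * E s + E (s + k)\<bar>" by linarith
  also have "E (s - k) - 2 * E s + E (s + k) = f (s - k) - 2 * f s + f (s + k)"
    using chord_second_diff[of p q f s k] unfolding E_def by (simp add: algebra_simps)
  also have "\<bar>\<dots>\<bar> \<le> W" using second_diff[OF in_pq] .
  finally show ?thesis using s_max[OF \<open>t \<in> {p..q}\<close>] unfolding E_def by simp
qed

definition grid_cell :: "real \<Rightarrow> real \<Rightarrow> nat \<Rightarrow> real \<Rightarrow> nat" where
  "grid_cell a h N t = min (N - 1) (nat \<lfloor>(t - a) / h\<rfloor>)"

definition grid_interp :: "real \<Rightarrow> real \<Rightarrow> nat \<Rightarrow> (real \<Rightarrow> real) \<Rightarrow> real \<Rightarrow> real" where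
  "grid_interp a h N f t =
     (let p = a + real (grid_cell a h N t) * h in chord p (p + h) f t)"

lemma grid_cell_bounds:
  assumes "h > 0" "N \<ge> 1" "t \<in> {a .. a + real N * h}"
  shows "grid_cell a h N t < N" "a + real (grid_cell a h N t) * h \<le> t"
    "t \<le> a + real (grid_cell a h N t) * h + h"
proof -
  define r where "r = (t - a) / h"
  have r: "0 \<le> r" "r \<le> real N" "t = a + r * h"
    using assms unfolding r_def by (auto simp: field_simps)
  have "grid_cell a h N t < N \<and> real (grid_cell a h N t) \<le> r \<and> r \<le> real (grid_cell a h N t) + 1"
  proof (cases "nat \<lfloor>r\<rfloor> \<le> N - 1")
    case True
    then have "grid_cell a h N t = nat \<lfloor>r\<rfloor>" unfolding grid_cell_def r_def by simp
    then show ?thesis using True r assms(2) by linarith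
  next
    case False
    \<comment> \<open>Only the right endpoint falls here; it is assigned to the last cell.\<close>
    then have "grid_cell a h N t = N - 1" unfolding grid_cell_def r_def by simp
    moreover have "r = real N" using False r by linarith
    ultimately show ?thesis using assms(2) by (simp add: of_nat_diff)
  qed
  moreover from this have "real (grid_cell a h N t) * h \<le> r * h" "r * h \<le> (real (grid_cell a h N t) + 1) * h"
    using assms(1) by (simp_all add: mult_right_mono)
  ultimately show "grid_cell a h N t < N" "a + real (grid_cell a h N t) * h \<le> t"
    "t \<le> a + real (grid_cell a h N t) * h + h"
    using r(3) by (simp_all add: algebra_simps)
qed

lemma grid_interp_error:
  assumes "h > 0" "N \<ge> 1" "b = a + real N * h" "continuous_on {a..b} f"
    and second_diff: "\<And>y k. y - k \<in> {a..b} \<Longrightarrow> y + k \<in> {a..b} \<Longrightarrow> \<bar>k\<bar> \<le> h \<Longrightarrow>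
               \<bar>f (y - k) - 2 * f y + f (y + k)\<bar> \<le> W"
    and "t \<in> {a..b}"
  shows "\<bar>f t - grid_interp a h N f t\<bar> \<le> W"
proof -
  define p where "p = a + real (grid_cell a h N t) * h"
  have t: "p \<le> t" "t \<le> p + h" and "grid_cell a h N t < N"
    using grid_cell_bounds[OF assms(1,2)] assms(3,6) unfolding p_def by auto
  then have "real (grid_cell a h N t) * h + h \<le> real N * h"
    using assms(1) mult_right_mono[of "real (grid_cell a h N t) + 1" "real N" h] by (simp add: algebra_simps)
  then have sub: "{p .. p + h} \<subseteq> {a..b}" using assms(1,3) unfolding p_def by auto
  have "\<bar>f t - chord p (p + h) f t\<bar> \<le> W"
  proof (rule chord_error_le_second_diff)
    show "continuous_on {p .. p + h} f" using continuous_on_subset[OF assms(4) sub] .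
    fix y k assume "y - k \<in> {p .. p + h}" "y + k \<in> {p .. p + h}" "\<bar>k\<bar> \<le> (p + h - p) / 2"
    then show "\<bar>f (y - k) - 2 * f y + f (y + k)\<bar> \<le> W" using sub assms(1) by (intro second_diff) auto
  qed (use t assms(1) in auto)
  then show ?thesis by (simp add: grid_interp_def Let_def p_def)
qed

lemma chord_deviation_at_nodes:
  assumes "h > 0" "N \<ge> 1" "b = a + real N * h"
    and node_second_diff: "\<And>j. 0 < j \<Longrightarrow> j < N \<Longrightarrow>
      \<bar>f (a + real j * h - h) - 2 * f (a + real j * h) + f (a + real j * h + h)\<bar> \<le> W"
    and "j \<le> N"
  shows "\<bar>f (a + real j * h) - chord a b f (a + real j * h)\<bar>
           \<le> W / (2 * h^2) * ((a + real j * h - a) * (b - (a + real j * h)))"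
proof -
  define v where "v j = f (a + real j * h) - chord a b f (a + real j * h)" for j
  have "a \<noteq> b" using assms(1-3) by simp
  have "\<bar>v j\<bar> \<le> W / 2 * (real j * (real N - real j))"
  proof (rule abs_le_of_second_diff_le[OF _ _ _ \<open>j \<le> N\<close>])
    show "v 0 = 0" "v N = 0" unfolding v_def using \<open>a \<noteq> b\<close> assms(3) by (simp_all add: chord_left chord_right)
    fix i assume i: "0 < i" "i < N"
    note chord_second_diff[of a b f "a + real i * h" h]
    moreover have nodes: "a + real (i - 1) * h = a + real i * h - h" "a + real (i + 1) * h = a + real i * h + h"
      using i by (simp_all add: of_nat_diff algebra_simps)
    ultimately have "v (i - 1) - 2 * v i + v (i + 1)
        = f (a + real i * h - h) - 2 * f (a + real i * h) + f (a + real i * h + h)"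
      unfolding v_def nodes by argo
    then show "\<bar>v (i - 1) - 2 * v i + v (i + 1)\<bar> \<le> W" using node_second_diff[OF i] by simp
  qed
  also have "\<dots> = W / (2 * h^2) * ((a + real j * h - a) * (b - (a + real j * h)))"
    unfolding assms(3) using assms(1) by (simp add: field_simps power2_eq_square)
  finally show ?thesis unfolding v_def .
qed

lemma grid_interp_chord_deviation:
  assumes "h > 0" "N \<ge> 1" "b = a + real N * h"
    and second_diff: "\<And>y k. y - k \<in> {a..b} \<Longrightarrow> y + k \<in> {a..b} \<Longrightarrow> \<bar>k\<bar> \<le> h \<Longrightarrow>
               \<bar>f (y - k) - 2 * f y + f (y + k)\<bar> \<le> W"
    and "t \<in> {a..b}"
  shows "\<bar>grid_interp a h N f t - chord a b f t\<bar> \<le> W / (2 * h^2) * ((t - a) * (b - t))"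
proof -
  have node_second_diff:
    "\<bar>f (a + real j * h - h) - 2 * f (a + real j * h) + f (a + real j * h + h)\<bar> \<le> W"
    if "0 < j" "j < N" for j
  proof (rule second_diff)
    have "h \<le> real j * h" "real j * h + h \<le> real N * h"
      using that \<open>0 < h\<close> mult_right_mono[of "real j + 1" "real N" h] by (auto simp: algebra_simps)
    then show "a + real j * h - h \<in> {a..b}" "a + real j * h + h \<in> {a..b}" using assms(1,3) by auto
  qed (use \<open>0 < h\<close> in auto)
  define w where "w t = (t - a) * (b - t)" for t
  define c where "c = W / (2 * h^2)"
  define v where "v t = f t - chord a b f t" for t
  define j where "j = grid_cell a h N t"
  define p where "p = a + real j * h"
  define l where "l = (t - p) / h"
  have "j < N" "p \<le> t" "t \<le> p + h"
    using grid_cell_bounds[OF assms(1,2)] assms(3,5) unfolding j_def p_def by auto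
  then have l: "0 \<le> l" "l \<le> 1" and t: "t = (1 - l) * p + l * (p + h)"
    unfolding l_def using assms(1) by (auto simp: field_simps)
  have v_bound: "\<bar>v p\<bar> \<le> c * w p" "\<bar>v (p + h)\<bar> \<le> c * w (p + h)"
    using chord_deviation_at_nodes[OF assms(1-3) node_second_diff, of j]
      chord_deviation_at_nodes[OF assms(1-3) node_second_diff, of "Suc j"] \<open>j < N\<close>
    unfolding v_def c_def w_def p_def by (simp_all add: algebra_simps)
  have "grid_interp a h N f t = chord p (p + h) f t"
    unfolding grid_interp_def Let_def j_def[symmetric] p_def[symmetric] ..
  also have "\<dots> = (1 - l) * f p + l * f (p + h)"
    using assms(1) unfolding t chord_affine_comb by (simp add: chord_left chord_right)
  finally have "grid_interp a h N f t - chord a b f t = (1 - l) * v p + l * v (p + h)"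
    unfolding v_def t chord_affine_comb by (simp add: algebra_simps)
  then have "\<bar>grid_interp a h N f t - chord a b f t\<bar> \<le> (1 - l) * \<bar>v p\<bar> + l * \<bar>v (p + h)\<bar>"
    using abs_triangle_ineq[of "(1 - l) * v p" "l * v (p + h)"] l by (simp add: abs_mult)
  also have "\<dots> \<le> (1 - l) * (c * w p) + l * (c * w (p + h))"
    using v_bound l by (intro add_mono mult_left_mono) auto
  also have "\<dots> \<le> c * w t"
  proof -
    have "w t - ((1 - l) * w p + l * w (p + h)) = l * (1 - l) * h^2"
      unfolding w_def t by (simp add: algebra_simps power2_eq_square)
    moreover have "0 \<le> l * (1 - l) * h^2" using l by simp
    ultimately have "(1 - l) * w p + l * w (p + h) \<le> w t" by linarith
    moreover have "0 \<le> c" unfolding c_def using second_diff[of a 0] assms(1,3) by simp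
    ultimately have "c * ((1 - l) * w p + l * w (p + h)) \<le> c * w t" by (rule mult_left_mono)
    then show ?thesis by (simp add: algebra_simps)
  qed
  finally show ?thesis unfolding w_def c_def .
qed

section \<open>Positive linear functionals reproducing affine functions\<close>

lemma positive_linear_abs_le:
  fixes L :: "(real \<Rightarrow> real) \<Rightarrow> real"
  assumes mono: "\<And>g h. \<forall>t\<in>{a..b}. g t \<le> h t \<Longrightarrow> L g \<le> L h"
    and scale: "\<And>c g. L (\<lambda>t. c * g t) = c * L g"
    and "\<forall>t\<in>{a..b}. \<bar>u t\<bar> \<le> v t"
  shows "\<bar>L u\<bar> \<le> L v"
proof -
  have "L u \<le> L v" using assms(3) by (intro mono) (auto simp: abs_le_iff)
  moreover have "L (\<lambda>t. - 1 * u t) \<le> L v" using assms(3) by (intro mono) (auto simp: abs_le_iff)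
  ultimately show ?thesis using scale[of "- 1" u] by simp
qed

lemma uniform_grid_step:
  assumes "\<delta> > 0" "2 * \<delta> \<le> b - a"
  obtains h N where "h > 0" "N \<ge> 1" "b = a + real N * h" "h \<le> \<delta>" "2 * \<delta> \<le> 3 * h"
proof -
  define N where "N = nat \<lceil>(b - a) / \<delta>\<rceil>"
  have ratio: "2 \<le> (b - a) / \<delta>" using assms by (simp add: field_simps)
  have N_ge: "(b - a) / \<delta> \<le> real N" and N_lt: "real N < (b - a) / \<delta> + 1"
    unfolding N_def using ceiling_correct[of "(b - a) / \<delta>"] ratio by linarith+
  have "real N \<ge> 2" using ratio N_ge by linarith
  then have "N \<ge> 1" by simp
  have "b - a \<le> \<delta> * real N" "2 * (\<delta> * real N) \<le> 3 * (b - a)"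
    using N_ge N_lt ratio assms(1) by (auto simp: field_simps)
  then show ?thesis
    using that[of "(b - a) / real N" N] assms \<open>N \<ge> 1\<close> by (auto simp: field_simps)
qed

lemma positive_linear_affine_error:
  fixes L :: "(real \<Rightarrow> real) \<Rightarrow> real" and f :: "real \<Rightarrow> real"
  assumes "a < b"
    and mono: "\<And>g h. \<forall>t\<in>{a..b}. g t \<le> h t \<Longrightarrow> L g \<le> L h"
    and diff: "\<And>g h. L (\<lambda>t. g t - h t) = L g - L h"
    and scale: "\<And>c g. L (\<lambda>t. c * g t) = c * L g"
    and affine: "\<And>c0 c1. L (\<lambda>t. c0 + c1 * t) = c0 + c1 * x"
    and weight: "L (\<lambda>t. (t - a) * (b - t)) \<le> \<delta>^2"
    and "\<delta> > 0" "2 * \<delta> \<le> b - a"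
    and "continuous_on {a..b} f"
    and second_diff: "\<And>y k. y - k \<in> {a..b} \<Longrightarrow> y + k \<in> {a..b} \<Longrightarrow> \<bar>k\<bar> \<le> \<delta> \<Longrightarrow>
               \<bar>f (y - k) - 2 * f y + f (y + k)\<bar> \<le> W"
  shows "\<bar>L f - chord a b f x\<bar> \<le> 17 / 8 * W"
proof -
  have "0 \<le> W" using second_diff[of a 0] \<open>a < b\<close> \<open>\<delta> > 0\<close> by simp
  obtain N h where grid: "h > 0" "N \<ge> 1" "b = a + real N * h" and "h \<le> \<delta>" "2 * \<delta> \<le> 3 * h"
    using uniform_grid_step[OF \<open>\<delta> > 0\<close> \<open>2 * \<delta> \<le> b - a\<close>] .
  define s where "s = grid_interp a h N f"
  define c where "c = W / (2 * h^2)"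
  have "0 \<le> c" unfolding c_def using \<open>0 \<le> W\<close> by simp
  have f_s: "\<forall>t\<in>{a..b}. \<bar>f t - s t\<bar> \<le> W"
    unfolding s_def using \<open>h \<le> \<delta>\<close>
    by (auto intro!: grid_interp_error[OF grid \<open>continuous_on {a..b} f\<close>] second_diff)
  have s_chord: "\<forall>t\<in>{a..b}. \<bar>s t - chord a b f t\<bar> \<le> c * ((t - a) * (b - t))"
    unfolding s_def c_def using \<open>h \<le> \<delta>\<close>
    by (intro ballI grid_interp_chord_deviation[OF grid]) (auto intro!: second_diff)
  have "L (chord a b f) = chord a b f x" unfolding chord_eq_affine by (rule affine)
  then have "L f - chord a b f x = L (\<lambda>t. f t - s t) + L (\<lambda>t. s t - chord a b f t)" using diff by simp
  moreover have "\<bar>L (\<lambda>t. f t - s t)\<bar> \<le> W"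
    using positive_linear_abs_le[of a b L, OF mono scale f_s] affine[of W 0] by simp
  moreover have "\<bar>L (\<lambda>t. s t - chord a b f t)\<bar> \<le> c * \<delta>^2"
  proof -
    have "\<bar>L (\<lambda>t. s t - chord a b f t)\<bar> \<le> c * L (\<lambda>t. (t - a) * (b - t))"
      using positive_linear_abs_le[of a b L, OF mono scale s_chord] scale by simp
    also have "\<dots> \<le> c * \<delta>^2" using weight \<open>0 \<le> c\<close> by (rule mult_left_mono)
    finally show ?thesis .
  qed
  moreover have "c * \<delta>^2 \<le> 9 / 8 * W"
  proof -
    have "\<delta>^2 \<le> (3 * h / 2)^2" using \<open>2 * \<delta> \<le> 3 * h\<close> \<open>\<delta> > 0\<close> by (intro power_mono) auto
    then have "c * \<delta>^2 \<le> c * (3 * h / 2)^2" using \<open>0 \<le> c\<close> by (rule mult_left_mono)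
    also have "\<dots> = 9 / 8 * W" unfolding c_def using \<open>0 < h\<close> by (simp add: field_simps power2_eq_square)
    finally show ?thesis .
  qed
  ultimately show ?thesis by linarith
qed

lemma positive_linear_affine_error_omega2:
  fixes L :: "(real \<Rightarrow> real) \<Rightarrow> real" and f :: "real \<Rightarrow> real"
  assumes "a < b" "{a..b} \<subseteq> {0..1}"
    and mono: "\<And>g h. \<forall>t\<in>{a..b}. g t \<le> h t \<Longrightarrow> L g \<le> L h"
    and diff: "\<And>g h. L (\<lambda>t. g t - h t) = L g - L h"
    and scale: "\<And>c g. L (\<lambda>t. c * g t) = c * L g"
    and affine: "\<And>c0 c1. L (\<lambda>t. c0 + c1 * t) = c0 + c1 * x"
    and weight: "L (\<lambda>t. (t - a) * (b - t)) \<le> \<delta>^2"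
    and "0 \<le> \<delta>" "2 * \<delta> \<le> b - a"
    and cont: "continuous_on {0..1} f"
  shows "\<bar>L f - chord a b f x\<bar> \<le> 17 / 8 * omega2 f \<delta>"
proof -
  have cont_ab: "continuous_on {a..b} f" using continuous_on_subset[OF cont assms(2)] .
  have error_le: "\<bar>L f - chord a b f x\<bar> \<le> 17 / 8 * omega2 f d"
    if "\<delta> \<le> d" "0 < d" "2 * d \<le> b - a" for d
  proof (rule positive_linear_affine_error[OF \<open>a < b\<close> mono diff scale affine _ that(2,3) cont_ab])
    show "L (\<lambda>t. (t - a) * (b - t)) \<le> d^2"
      using weight power_mono[OF that(1) \<open>0 \<le> \<delta>\<close>, of 2] by linarith
    fix y k assume "y - k \<in> {a..b}" "y + k \<in> {a..b}" "\<bar>k\<bar> \<le> d"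
    then show "\<bar>f (y - k) - 2 * f y + f (y + k)\<bar> \<le> omega2 f d"
      using assms(2) by (intro second_diff_le_omega2[OF cont]) auto
  qed
  show ?thesis
  proof (cases "\<delta> > 0")
    case True
    then show ?thesis using error_le \<open>2 * \<delta> \<le> b - a\<close> by simp
  next
    case False
    \<comment> \<open>Then \<open>\<delta> = 0\<close>, and the bound follows from \<open>omega2 f d \<rightarrow> 0\<close> as \<open>d \<rightarrow> 0\<close>.\<close>
    have "\<bar>L f - chord a b f x\<bar> \<le> 0 + e" if "e > 0" for e
    proof -
      obtain d where "d > 0" and small: "\<And>\<eta>. 0 \<le> \<eta> \<Longrightarrow> \<eta> \<le> d \<Longrightarrow> omega2 f \<eta> \<le> 8 / 17 * e"
        using omega2_small[OF cont, of "8 / 17 * e"] \<open>e > 0\<close> by auto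
      define d' where "d' = min d ((b - a) / 2)"
      have "0 < d'" "d' \<le> d" "2 * d' \<le> b - a" using \<open>d > 0\<close> \<open>a < b\<close> unfolding d'_def by (auto simp: min_def)
      then have "\<bar>L f - chord a b f x\<bar> \<le> 17 / 8 * omega2 f d'"
        using False \<open>0 \<le> \<delta>\<close> by (intro error_le) auto
      also have "\<dots> \<le> e" using small[of d'] \<open>0 < d'\<close> \<open>d' \<le> d\<close> by simp
      finally show ?thesis by simp
    qed
    then have "\<bar>L f - chord a b f x\<bar> \<le> 0" by (rule field_le_epsilon)
    then show ?thesis using omega2_nonneg[OF cont \<open>0 \<le> \<delta>\<close>] by simp
  qed
qed

lemma interval_weight_le: "(x - a) * (b - x) \<le> ((b - a) / 2)^2" for a b x :: real
proof -
  have "((b - a) / 2)^2 - (x - a) * (b - x) = (x - (a + b) / 2)^2"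
    by (simp add: power2_eq_square field_simps)
  then show ?thesis by (metis diff_ge_0_iff_ge zero_le_power2)
qed

lemma comp_bern_iter_error_on_piece:
  fixes n m r :: nat and f :: "real \<Rightarrow> real"
  assumes "n \<ge> 1" "m \<ge> 1" "continuous_on {0..1} f"
    and "k \<in> {1..m}" "x \<in> {(real k - 1) / real m .. real k / real m}"
  shows "\<bar>(comp_bern n m ^^ r) f x - pw_lin m f x\<bar>
           \<le> 9 / 4 * omega2 f (sqrt ((x - (real k - 1) / real m) * (real k / real m - x)
                                    * (1 - 1 / real n) ^ r))"
proof -
  define a where "a = (real k - 1) / real m"
  define b where "b = real k / real m"
  define \<delta> where "\<delta> = sqrt ((x - a) * (b - x) * (1 - 1 / real n) ^ r)"
  define L where "L g = (bern_ab a b n ^^ r) g x" for g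
  have "real m > 0" using assms(2) by simp
  then have "a < b" "{a..b} \<subseteq> {0..1}" using assms(4) unfolding a_def b_def by (auto simp: field_simps)
  have x: "x \<in> {a..b}" using assms(5) unfolding a_def b_def .
  have "0 \<le> 1 - 1 / real n" "1 - 1 / real n \<le> 1" using assms(1) by auto
  then have q: "0 \<le> (1 - 1 / real n) ^ r" "(1 - 1 / real n) ^ r \<le> 1"
    by (simp_all add: power_le_one)
  have w: "0 \<le> (x - a) * (b - x)" using x by simp
  have mono: "L g \<le> L h" if "\<forall>t\<in>{a..b}. g t \<le> h t" for g h
    unfolding L_def using bern_ab_iter_mono[OF \<open>a < b\<close> that] x by blast
  have diff: "L (\<lambda>t. g t - h t) = L g - L h" for g h
    unfolding L_def by (simp add: bern_ab_iter_diff)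
  have scale: "L (\<lambda>t. c * g t) = c * L g" for c g
    unfolding L_def by (simp add: bern_ab_iter_cmult)
  have affine: "L (\<lambda>t. c0 + c1 * t) = c0 + c1 * x" for c0 c1
    unfolding L_def using bern_ab_iter_affine[OF \<open>a < b\<close> assms(1) x] .
  have weight: "L (\<lambda>t. (t - a) * (b - t)) \<le> \<delta>^2"
    unfolding L_def \<delta>_def using bern_ab_iter_quadratic_weight[OF \<open>a < b\<close> assms(1) x] w q by simp
  have "0 \<le> \<delta>" unfolding \<delta>_def using w q by simp
  moreover have "2 * \<delta> \<le> b - a"
  proof -
    have "\<delta> \<le> sqrt (((b - a) / 2)^2)" unfolding \<delta>_def
      using mult_left_le[OF q(2) w] interval_weight_le[of x a b] by (intro real_sqrt_le_mono) linarith
    then show ?thesis using \<open>a < b\<close> by simp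
  qed
  ultimately have "\<bar>L f - chord a b f x\<bar> \<le> 17 / 8 * omega2 f \<delta>"
    using positive_linear_affine_error_omega2[of a b L, OF \<open>a < b\<close> \<open>{a..b} \<subseteq> {0..1}\<close>
        mono diff scale affine weight _ _ assms(3)] by blast
  moreover have "(comp_bern n m ^^ r) f x = L f"
    using comp_bern_iter_eq_bern_ab_iter[OF assms(1,2,4)] assms(5) unfolding L_def a_def b_def by blast
  moreover have "pw_lin m f x = chord a b f x"
    using pw_lin_on_piece[OF assms(2) _ assms(5)] assms(4) unfolding a_def b_def by simp
  moreover have "0 \<le> omega2 f \<delta>" using omega2_nonneg[OF assms(3) \<open>0 \<le> \<delta>\<close>] .
  ultimately show ?thesis unfolding \<delta>_def a_def b_def by simp
qed

lemma comp_bern_iter_error_le: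
  fixes n m r :: nat and f :: "real \<Rightarrow> real"
  assumes "n \<ge> 1" "m \<ge> 1" "continuous_on {0..1} f" "x \<in> {0..1}"
  shows "\<bar>(comp_bern n m ^^ r) f x - pw_lin m f x\<bar>
           \<le> 9 / 4 * omega2 f (1 / (2 * real m) * sqrt ((1 - 1 / real n) ^ r))"
proof -
  define k where "k = sub_idx m x"
  define a where "a = (real k - 1) / real m"
  define b where "b = real k / real m"
  define q where "q = (1 - 1 / real n) ^ r"
  have k: "k \<in> {1..m}" and x: "x \<in> {a..b}"
    using sub_idx_mem[OF assms(2,4)] unfolding k_def a_def b_def by auto
  have "0 \<le> q" unfolding q_def using assms(1) by simp
  have "b - a = 1 / real m" unfolding a_def b_def by (simp add: diff_divide_distrib)
  then have "(x - a) * (b - x) \<le> (1 / (2 * real m))^2" using interval_weight_le[of x a b] by (simp add: ac_simps)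
  then have "(x - a) * (b - x) * q \<le> (1 / (2 * real m))^2 * q"
    using \<open>0 \<le> q\<close> by (rule mult_right_mono)
  then have "sqrt ((x - a) * (b - x) * q) \<le> 1 / (2 * real m) * sqrt q"
    using real_sqrt_le_mono by (fastforce simp: real_sqrt_mult)
  moreover have "0 \<le> sqrt ((x - a) * (b - x) * q)" using x \<open>0 \<le> q\<close> by simp
  ultimately have "omega2 f (sqrt ((x - a) * (b - x) * q)) \<le> omega2 f (1 / (2 * real m) * sqrt q)"
    by (intro omega2_mono[OF assms(3)])
  then show ?thesis
    using comp_bern_iter_error_on_piece[OF assms(1-3) k, of x r] x unfolding a_def b_def q_def by simp
qed

lemma comp_bern_iter_uniform_limit:
  fixes n m :: nat and f :: "real \<Rightarrow> real"
  assumes "n \<ge> 1" "m \<ge> 1" "continuous_on {0..1} f"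
  shows "uniform_limit {0..1} (\<lambda>r. (comp_bern n m ^^ r) f) (pw_lin m f) sequentially"
proof (rule uniform_limitI)
  fix e :: real assume "e > 0"
  obtain d where "d > 0" and small: "\<And>\<eta>. 0 \<le> \<eta> \<Longrightarrow> \<eta> \<le> d \<Longrightarrow> omega2 f \<eta> \<le> e / 4"
    using omega2_small[OF assms(3), of "e / 4"] \<open>e > 0\<close> by auto
  define q where "q = 1 - 1 / real n"
  have "0 \<le> q" "q < 1" unfolding q_def using assms(1) by auto
  then have "(\<lambda>r. q ^ r) \<longlonglongrightarrow> 0" by (rule LIMSEQ_realpow_zero)
  then have "\<forall>\<^sub>F r in sequentially. q ^ r < d^2" using \<open>d > 0\<close> by (intro order_tendstoD) auto
  then show "\<forall>\<^sub>F r in sequentially. \<forall>x\<in>{0..1}. dist ((comp_bern n m ^^ r) f x) (pw_lin m f x) < e"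
  proof (rule eventually_mono, intro ballI)
    fix r :: nat and x :: real assume "q ^ r < d^2" "x \<in> {0..1}"
    define \<eta> where "\<eta> = 1 / (2 * real m) * sqrt (q ^ r)"
    have "sqrt (q ^ r) \<le> d" using \<open>q ^ r < d^2\<close> \<open>d > 0\<close> by (intro real_le_lsqrt) auto
    moreover have "1 / (2 * real m) \<le> 1" using assms(2) by simp
    ultimately have "\<eta> \<le> d" unfolding \<eta>_def using \<open>0 \<le> q\<close> mult_mono[of "1 / (2 * real m)" 1] by fastforce
    have "0 \<le> \<eta>" unfolding \<eta>_def using \<open>0 \<le> q\<close> by simp
    have "\<bar>(comp_bern n m ^^ r) f x - pw_lin m f x\<bar> \<le> 9 / 4 * omega2 f \<eta>"
      using comp_bern_iter_error_le[OF assms \<open>x \<in> {0..1}\<close>] unfolding \<eta>_def q_def .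
    also have "\<dots> \<le> 9 / 4 * (e / 4)" using small[OF \<open>0 \<le> \<eta>\<close> \<open>\<eta> \<le> d\<close>] by simp
    finally show "dist ((comp_bern n m ^^ r) f x) (pw_lin m f x) < e"
      using \<open>e > 0\<close> by (simp add: dist_real_def)
  qed
qed

theorem mainTheorem2:
  fixes n m r :: nat and f :: "real \<Rightarrow> real"
  assumes "n \<ge> 1" and "m \<ge> 1"
    and "continuous_on {0..1} f"
  shows "(\<forall>k \<in> {1..m}. \<forall>x \<in> {(real k - 1) / real m .. real k / real m}.
            \<bar>(comp_bern n m ^^ r) f x - pw_lin m f x\<bar>
              \<le> 9 / 4 * omega2 f (sqrt ((x - (real k - 1) / real m) * (real k / real m - x)
                                        * (1 - 1 / real n) ^ r)))
       \<and> sup_norm01 (\<lambda>x. (comp_bern n m ^^ r) f x - pw_lin m f x)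
           \<le> 9 / 4 * omega2 f (1 / (2 * real m) * sqrt ((1 - 1 / real n) ^ r))
       \<and> uniform_limit {0..1} (\<lambda>s. (comp_bern n m ^^ s) f) (pw_lin m f) sequentially"
proof (intro conjI ballI)
  fix k x assume "k \<in> {1..m}" "x \<in> {(real k - 1) / real m .. real k / real m}"
  then show "\<bar>(comp_bern n m ^^ r) f x - pw_lin m f x\<bar>
              \<le> 9 / 4 * omega2 f (sqrt ((x - (real k - 1) / real m) * (real k / real m - x)
                                        * (1 - 1 / real n) ^ r))"
    by (rule comp_bern_iter_error_on_piece[OF assms])
next
  show "sup_norm01 (\<lambda>x. (comp_bern n m ^^ r) f x - pw_lin m f x)
           \<le> 9 / 4 * omega2 f (1 / (2 * real m) * sqrt ((1 - 1 / real n) ^ r))"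
    unfolding sup_norm01_def using comp_bern_iter_error_le[OF assms] by (intro cSup_least) auto
qed (rule comp_bern_iter_uniform_limit[OF assms])

end
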